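(* Let $N\ge2$ be an integer and let $\omega$ be a primitive $N$-th root of unity. For all nonzero complex numbers $b,z$, $$\sum_{k=0}^{N-1}(b;\omega)_k\,z^k=\Big(\frac{bz}{\omega}\Big)^{N-1}\sum_{k=0}^{N-1}(\omega/z;\omega)_k\Big(\frac{\omega}{b}\Big)^k .$$
   Context: $(x;q)_k=\prod_{m=1}^{k}(1-xq^{m-1})$ denotes the $q$-Pochhammer symbol, with $(x;q)_0=1$. *)

theory Defs
  imports Complex_Main
begin

definition qpoch :: "complex \<Rightarrow> complex \<Rightarrow> nat \<Rightarrow> complex" where
  "qpoch x q k = (\<Prod>m=1..k. 1 - x * q ^ (m - 1))"

definition primitive_root_of_unity :: "nat \<Rightarrow> complex \<Rightarrow> bool" where
  "primitive_root_of_unity N w \<longleftrightarrow> 0 < N \<and> w ^ N = 1 \<and> (\<forall>k. 0 < k \<and> k < N \<longrightarrow> w ^ k \<noteq> 1)"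

end

theory Submission
  imports Defs "HOL-Computational_Algebra.Polynomial"
begin

(* Write N = n + 1 and fix z.  As functions of x, both sides of the identity
   satisfy the same first-order q-difference equation
       f(x) - 1 + z^N (1 - x^N) = z (1 - x) f(w x):
   for the left side L(x) = sum_{k<N} (x;w)_k z^k this is a telescoping identity valid for any
   base w (up to the term z^N (x;w)_N), and (x;w)_N = 1 - x^N because w is a primitive root;
   the right side is first rewritten as R(x) = sum_{j<N} (x z/w)^j P(n-j) with
   P(k) = prod_{m=1..k} (z - w^m), and the equation follows by splitting each term using
   P(k+1) = P(k)(z - w^(k+1)) and P(N) = z^N - 1.
   Hence D = L - R satisfies D(x) = z (1-x) D(w x); iterating N times gives
   D(x) = z^N (1 - x^N) D(x), so D vanishes off the finitely many x with z^N (1 - x^N) = 1,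
   and by continuity (D is a polynomial) D vanishes everywhere. *)

lemma primitive_root_of_unity_facts:
  assumes "primitive_root_of_unity N w"
  shows "N > 0" "w ^ N = 1" "w \<noteq> 0"
  using assms unfolding primitive_root_of_unity_def
  by (auto simp: power_0_left split: if_splits)

lemma primitive_root_powers_inj:
  assumes "primitive_root_of_unity N w"
  shows "inj_on (\<lambda>m. w ^ m) {..<N}"
proof -
  have w0: "w \<noteq> 0" using primitive_root_of_unity_facts[OF assms] by simp
  have no_collision: "w ^ i \<noteq> w ^ j" if "i < j" "j < N" for i j
  proof
    assume "w ^ i = w ^ j"
    moreover have "w ^ j = w ^ i * w ^ (j - i)" using \<open>i < j\<close> by (simp flip: power_add)
    ultimately have "w ^ (j - i) = 1" using w0 by simp
    then show False using assms that unfolding primitive_root_of_unity_def by auto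
  qed
  show ?thesis
    by (rule inj_onI) (metis lessThan_iff linorder_neqE_nat no_collision)
qed

text \<open>The \<open>N\<close>-th roots of unity are exactly the powers of a primitive one, hence
  \<open>x ^ N - 1\<close> splits into the linear factors \<open>x - w ^ m\<close>.\<close>

lemma prod_primitive_root_powers:
  assumes "primitive_root_of_unity N w"
  shows "(\<Prod>m<N. x - w ^ m) = x ^ N - 1"
proof -
  note facts = primitive_root_of_unity_facts[OF assms]
  define p where "p = (\<Prod>m<N. [:- (w ^ m), 1:])"
  define q where "q = (monom 1 N - 1 :: complex poly)"
  have "p = q"
  proof (rule poly_eqI_degree_lead_coeff[where n = N and A = "(\<lambda>m. w ^ m) ` {..<N}"])
    have deg_p: "degree p = N" unfolding p_def by (subst degree_prod_sum_eq) auto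
    then show "degree p \<le> N" by simp
    have "lead_coeff p = 1" unfolding p_def lead_coeff_prod by simp
    then show "coeff p N = coeff q N" using deg_p facts by (simp add: q_def coeff_monom)
    show "degree q \<le> N" unfolding q_def
      by (metis degree_diff_le degree_monom_le degree_1 le0)
    show "card ((\<lambda>m. w ^ m) ` {..<N}) \<ge> N"
      using primitive_root_powers_inj[OF assms] by (simp add: card_image)
    fix y assume "y \<in> (\<lambda>m. w ^ m) ` {..<N}"
    then obtain m where m: "m < N" "y = w ^ m" by auto
    have "y ^ N = 1" using m facts by (simp flip: power_mult add: mult.commute[of m] power_mult)
    moreover have "poly p y = 0" unfolding p_def poly_prod using m by force
    ultimately show "poly p y = poly q y" by (simp add: q_def poly_monom)
  qed
  then have "poly p x = poly q x" by simp
  then show ?thesis unfolding p_def q_def poly_prod by (simp add: poly_monom)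
qed

lemma qpoch_lessThan: "qpoch x q k = (\<Prod>m<k. 1 - x * q ^ m)"
  unfolding qpoch_def by (induction k) (auto simp: prod.lessThan_Suc)

lemma qpoch_0 [simp]: "qpoch x q 0 = 1"
  by (simp add: qpoch_def)

lemma qpoch_Suc: "qpoch x q (Suc k) = qpoch x q k * (1 - x * q ^ k)"
  by (simp add: qpoch_lessThan)

lemma qpoch_Suc_shift: "qpoch x q (Suc k) = (1 - x) * qpoch (q * x) q k"
  unfolding qpoch_lessThan prod.lessThan_Suc_shift by (simp add: mult_ac)

lemma qpoch_full_period:
  assumes "primitive_root_of_unity N w"
  shows "qpoch x w N = 1 - x ^ N"
proof (cases "x = 0")
  case True
  then show ?thesis using primitive_root_of_unity_facts[OF assms] by (simp add: qpoch_lessThan)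
next
  case False
  have "qpoch x w N = (\<Prod>m<N. x * (1 / x - w ^ m))"
    unfolding qpoch_lessThan using False by (intro prod.cong) (auto simp: field_simps)
  also have "\<dots> = x ^ N * ((1 / x) ^ N - 1)"
    by (simp add: prod.distrib prod_primitive_root_powers[OF assms])
  also have "\<dots> = 1 - x ^ N" using False by (simp add: field_simps power_divide)
  finally show ?thesis .
qed

text \<open>The products \<open>P(k) = (z - q) (z - q^2) \<dots> (z - q^k)\<close>, i.e. \<open>z^k (q/z;q)_k\<close>, which make up
  the right-hand side of the theorem.\<close>

definition root_prod :: "complex \<Rightarrow> complex \<Rightarrow> nat \<Rightarrow> complex" where
  "root_prod q z k = (\<Prod>m=1..k. z - q ^ m)"

lemma root_prod_0 [simp]: "root_prod q z 0 = 1"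
  by (simp add: root_prod_def)

lemma root_prod_Suc: "root_prod q z (Suc k) = root_prod q z k * (z - q ^ Suc k)"
  by (simp add: root_prod_def)

lemma qpoch_eq_root_prod:
  assumes "z \<noteq> 0"
  shows "qpoch (q / z) q k * z ^ k = root_prod q z k"
proof (induction k)
  case (Suc k)
  have "qpoch (q / z) q (Suc k) * z ^ Suc k = (qpoch (q / z) q k * z ^ k) * ((1 - q / z * q ^ k) * z)"
    by (simp add: qpoch_Suc mult_ac)
  also have "(1 - q / z * q ^ k) * z = z - q ^ Suc k" using assms by (simp add: field_simps)
  finally show ?case using Suc by (simp add: root_prod_Suc)
qed simp

lemma root_prod_full_period:
  assumes "primitive_root_of_unity N w"
  shows "root_prod w z N = z ^ N - 1"
proof -
  note facts = primitive_root_of_unity_facts[OF assms]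
  have "root_prod w z N = (\<Prod>m<N. z - w ^ Suc m)"
    unfolding root_prod_def by (induction N) (auto simp: prod.lessThan_Suc)
  also have "\<dots> = (\<Prod>m<N. z - w ^ m)"
  proof -
    obtain n where N: "N = Suc n" using facts by (cases N) auto
    have "(\<Prod>m<Suc n. z - w ^ Suc m) = (\<Prod>m<n. z - w ^ Suc m) * (z - w ^ 0)"
      using facts N by simp
    also have "\<dots> = (\<Prod>m<Suc n. z - w ^ m)"
      unfolding prod.lessThan_Suc_shift by (simp add: mult.commute)
    finally show ?thesis using N by simp
  qed
  also have "\<dots> = z ^ N - 1" by (rule prod_primitive_root_powers[OF assms])
  finally show ?thesis .
qed

section \<open>The two q-difference equations\<close>

definition qseries :: "complex \<Rightarrow> complex \<Rightarrow> nat \<Rightarrow> complex \<Rightarrow> complex" where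
  "qseries q z n x = (\<Sum>k<n. qpoch x q k * z ^ k)"

text \<open>Telescoping: \<open>z (1-x) L(qx)\<close> is \<open>L(x)\<close> shifted by one index; valid for every base \<open>q\<close>.\<close>

lemma qseries_difference_eq:
  "qseries q z n x - 1 + z ^ n * qpoch x q n = z * (1 - x) * qseries q z n (q * x)"
proof -
  have "z * (1 - x) * qseries q z n (q * x) = (\<Sum>k<n. qpoch x q (Suc k) * z ^ Suc k)"
    unfolding qseries_def sum_distrib_left by (intro sum.cong refl) (simp add: qpoch_Suc_shift)
  also have "\<dots> = (\<Sum>k<Suc n. qpoch x q k * z ^ k) - 1"
    unfolding sum.lessThan_Suc_shift by simp
  also have "\<dots> = qseries q z n x - 1 + z ^ n * qpoch x q n"
    by (simp add: qseries_def mult.commute)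
  finally show ?thesis by simp
qed

definition dual_series :: "complex \<Rightarrow> complex \<Rightarrow> nat \<Rightarrow> complex \<Rightarrow> complex" where
  "dual_series q z n x = (\<Sum>j<n. (x * z / q) ^ j * root_prod q z (n - 1 - j))"

text \<open>For a root of unity \<open>q\<close>, splitting \<open>P(k+1) = z P(k) - q^(k+1) P(k)\<close> turns \<open>R\<close> into
  \<open>z R(qx)\<close> minus a shifted copy of \<open>x z R(qx)\<close>; the boundary terms are \<open>P(N)\<close> and \<open>(xz)^N\<close>.\<close>

lemma dual_series_difference_eq:
  assumes "q ^ N = 1" and "N > 0"
  shows "dual_series q z N x - (x * z) ^ N + root_prod q z N = z * (1 - x) * dual_series q z N (q * x)"
proof -
  obtain n where N: "N = Suc n" using assms(2) by (cases N) auto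
  have q0: "q \<noteq> 0" using assms by (metis power_0_left less_not_refl2 zero_neq_one)
  let ?P = "root_prod q z"
  have R_def: "dual_series q z N y = (\<Sum>j\<le>n. (y * z / q) ^ j * ?P (n - j))" for y
    unfolding dual_series_def N lessThan_Suc_atMost by simp
  have Rq: "dual_series q z N (q * x) = (\<Sum>j\<le>n. (x * z) ^ j * ?P (n - j))"
    unfolding R_def using q0 by (intro sum.cong refl) (simp add: field_simps)
  have split_term: "(x * z / q) ^ j * ?P (n - j) = x ^ j * z ^ Suc j * ?P (n - j) - (x * z) ^ j * ?P (N - j)"
    if "j \<le> n" for j
  proof -
    have "q ^ Suc (n - j) * q ^ j = q ^ N" using that N by (simp flip: power_add)
    then have "(x * z / q) ^ j = (x * z) ^ j * q ^ Suc (n - j)"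
      using assms(1) q0 by (simp add: power_divide field_simps)
    moreover have "N - j = Suc (n - j)" using that N by simp
    ultimately show ?thesis by (simp add: root_prod_Suc power_mult_distrib algebra_simps)
  qed
  let ?Rq = "dual_series q z N (q * x)"
  have "dual_series q z N x
      = (\<Sum>j\<le>n. x ^ j * z ^ Suc j * ?P (n - j)) - (\<Sum>j\<le>n. (x * z) ^ j * ?P (N - j))"
    unfolding R_def sum_subtractf[symmetric] by (intro sum.cong refl split_term) simp
  also have "(\<Sum>j\<le>n. x ^ j * z ^ Suc j * ?P (n - j)) = z * ?Rq"
    unfolding Rq sum_distrib_left by (intro sum.cong refl) (simp add: power_mult_distrib mult_ac)
  also have "(\<Sum>j\<le>n. (x * z) ^ j * ?P (N - j))
      = (\<Sum>j\<le>N. (x * z) ^ j * ?P (N - j)) - (x * z) ^ N"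
    by (simp add: N)
  also have "(\<Sum>j\<le>N. (x * z) ^ j * ?P (N - j)) = ?P N + x * z * ?Rq"
    unfolding Rq sum_distrib_left unfolding N sum.atMost_Suc_shift by (simp add: mult_ac)
  finally show ?thesis by (simp add: algebra_simps)
qed

lemma reflection_difference_eqs:
  assumes "primitive_root_of_unity N w"
  shows "qseries w z N x + (z ^ N * (1 - x ^ N) - 1) = z * (1 - x) * qseries w z N (w * x)"
    and "dual_series w z N x + (z ^ N * (1 - x ^ N) - 1) = z * (1 - x) * dual_series w z N (w * x)"
proof -
  note facts = primitive_root_of_unity_facts[OF assms]
  show "qseries w z N x + (z ^ N * (1 - x ^ N) - 1) = z * (1 - x) * qseries w z N (w * x)"
    using qseries_difference_eq[of w z N x] by (simp add: qpoch_full_period[OF assms] algebra_simps)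
  show "dual_series w z N x + (z ^ N * (1 - x ^ N) - 1) = z * (1 - x) * dual_series w z N (w * x)"
    using dual_series_difference_eq[OF facts(2,1), of z x]
    by (simp add: root_prod_full_period[OF assms] algebra_simps power_mult_distrib)
qed

section \<open>Uniqueness for the q-difference equation\<close>

lemma difference_eq_iterate:
  assumes "\<And>x. D x = c * (1 - x) * D (q * x)"
  shows "D x = c ^ k * qpoch x q k * D (q ^ k * x)"
proof (induction k)
  case (Suc k)
  have "D (q ^ k * x) = c * (1 - x * q ^ k) * D (q ^ Suc k * x)"
    using assms[of "q ^ k * x"] by (simp add: mult_ac)
  with Suc show ?case by (simp add: qpoch_Suc mult_ac)
qed simp

lemma continuous_vanishing_off_finite:
  fixes f :: "'a :: {perfect_space, t2_space} \<Rightarrow> 'b :: {t2_space, zero}"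
  assumes "continuous (at b) f" and "finite S" and "\<And>x. x \<notin> S \<Longrightarrow> f x = 0"
  shows "f b = 0"
proof -
  have "eventually (\<lambda>x. \<forall>y\<in>S. x \<noteq> y) (at b)"
    using assms(2) by (intro eventually_ball_finite) (auto intro: eventually_neq_at_within)
  then have "eventually (\<lambda>x. f x = 0) (at b)"
    by eventually_elim (use assms(3) in blast)
  then have "(f \<longlongrightarrow> 0) (at b)" by (rule tendsto_eventually)
  moreover have "(f \<longlongrightarrow> f b) (at b)" using assms(1) by (simp add: continuous_at)
  ultimately show ?thesis by (intro tendsto_unique) auto
qed

text \<open>For a primitive \<open>N\<close>-th root \<open>w\<close> and \<open>c \<noteq> 0\<close>, the equation \<open>D(x) = c (1-x) D(wx)\<close> has no
  nonzero continuous solution: after \<open>N\<close> steps it reads \<open>D(x) = c^N (1 - x^N) D(x)\<close>.\<close>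

lemma difference_eq_unique:
  assumes "primitive_root_of_unity N w" and "c \<noteq> 0"
    and eq: "\<And>x. D x = c * (1 - x) * D (w * x)" and "continuous (at b) D"
  shows "D b = 0"
proof -
  note facts = primitive_root_of_unity_facts[OF assms(1)]
  have vanishing: "D x = 0" if x: "x ^ N \<noteq> 1 - 1 / c ^ N" for x
  proof -
    have "D x = c ^ N * (1 - x ^ N) * D x"
      using difference_eq_iterate[OF eq, of x N] facts qpoch_full_period[OF assms(1)] by simp
    moreover have "c ^ N * (1 - x ^ N) \<noteq> 1" using x assms(2) by (auto simp: field_simps)
    ultimately show "D x = 0" by (metis mult_cancel_right2)
  qed
  show ?thesis
    using continuous_vanishing_off_finite[OF assms(4) finite_nth_roots[OF facts(1)]] vanishing
    by blast
qed

text \<open>The right-hand side of the theorem is the reversed series \<open>R(b)\<close>: expand \<open>(w/z;w)_k\<close> as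
  \<open>P(k)/z^k\<close>, absorb the powers and reverse the order of summation.\<close>

lemma rhs_eq_dual_series:
  assumes "primitive_root_of_unity N w" and "b \<noteq> 0" and "z \<noteq> 0"
  shows "(b * z / w) ^ (N - 1) * (\<Sum>k<N. qpoch (w / z) w k * (w / b) ^ k) = dual_series w z N b"
proof -
  have w0: "w \<noteq> 0" using primitive_root_of_unity_facts[OF assms(1)] by simp
  have "(b * z / w) ^ (N - 1) * (\<Sum>k<N. qpoch (w / z) w k * (w / b) ^ k)
      = (\<Sum>k<N. (b * z / w) ^ (N - 1 - k) * root_prod w z k)"
    unfolding sum_distrib_left
  proof (intro sum.cong refl)
    fix k assume "k \<in> {..<N}"
    then have "(b * z / w) ^ (N - 1) = (b * z / w) ^ (N - 1 - k) * (b * z / w) ^ k"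
      by (simp flip: power_add)
    then have "(b * z / w) ^ (N - 1) * (qpoch (w / z) w k * (w / b) ^ k)
        = (b * z / w) ^ (N - 1 - k) * ((b * z / w) ^ k * (w / b) ^ k) * qpoch (w / z) w k"
      by (simp add: mult_ac)
    also have "(b * z / w) ^ k * (w / b) ^ k = z ^ k"
      using assms(2) w0 by (simp flip: power_mult_distrib)
    also have "(b * z / w) ^ (N - 1 - k) * z ^ k * qpoch (w / z) w k
        = (b * z / w) ^ (N - 1 - k) * root_prod w z k"
      by (metis mult.assoc mult.commute qpoch_eq_root_prod[OF assms(3)])
    finally show "(b * z / w) ^ (N - 1) * (qpoch (w / z) w k * (w / b) ^ k)
        = (b * z / w) ^ (N - 1 - k) * root_prod w z k" .
  qed
  also have "\<dots> = dual_series w z N b"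
    unfolding dual_series_def
    by (rule sum.reindex_bij_witness[where i = "\<lambda>j. N - 1 - j" and j = "\<lambda>j. N - 1 - j"]) auto
  finally show ?thesis .
qed

theorem mainTheorem3:
  fixes N :: nat and w b z :: complex
  assumes "N \<ge> 2" and "primitive_root_of_unity N w" and "b \<noteq> 0" and "z \<noteq> 0"
  shows "(\<Sum>k=0..N-1. qpoch b w k * z ^ k)
         = (b * z / w) ^ (N - 1) * (\<Sum>k=0..N-1. qpoch (w / z) w k * (w / b) ^ k)"
proof -
  have range: "{0..N-1} = {..<N}" using assms(1) by auto
  note facts = primitive_root_of_unity_facts[OF assms(2)]
  define D where "D x = qseries w z N x - dual_series w z N x" for x
  have "D x = z * (1 - x) * D (w * x)" for x
    unfolding D_def right_diff_distrib[of "z * (1 - x)"] reflection_difference_eqs[OF assms(2), symmetric]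
    by simp
  moreover have "continuous (at b) D"
    unfolding D_def qseries_def dual_series_def qpoch_def by (intro continuous_intros) (use facts in auto)
  ultimately have "D b = 0" by (intro difference_eq_unique[OF assms(2,4)])
  then show ?thesis
    unfolding range rhs_eq_dual_series[OF assms(2-4)] by (simp add: D_def qseries_def)
qed

end
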